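(* Let $H_B=(V_B,E_B)$ be a 3-uniform hypergraph with $n=|V_B|$ vertices, let $\varepsilon=1/n^{100}$, and let $\{\mathbf v_a\}_{a\in V_B\cup\{\emptyset\}}$ be a feasible solution of the SDP below with respect to which every vertex of $H_B$ is $\varepsilon$-balanced. Then for every edge $\{a,b,c\}\in E_B$, $\|\bar{\mathbf u}_a+\bar{\mathbf u}_b+\bar{\mathbf u}_c\|^2\le 18\varepsilon$.
   Context: SDP: unit vectors $\mathbf v_a\in\mathbb R^d$ for $a\in V_B\cup\{\emptyset\}$ with $\mathbf v_a+\mathbf v_b+\mathbf v_c=-\mathbf v_\emptyset$ for every edge $\{a,b,c\}$. $\gamma_a=\langle\mathbf v_a,\mathbf v_\emptyset\rangle$; vertex $a$ is $\varepsilon$-balanced if $\gamma_a\in[-1/3-\varepsilon,-1/3+\varepsilon]$. For such $a$, $\bar{\mathbf u}_a=\frac{\mathbf v_a-\gamma_a\mathbf v_\emptyset}{\sqrt{1-\gamma_a^2}}$ (the unit vector along the component of $\mathbf v_a$ orthogonal to $\mathbf v_\emptyset$). *)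

theory Defs
  imports "HOL-Analysis.Analysis"
begin

definition three_uniform_hypergraph :: "'v set \<Rightarrow> 'v set set \<Rightarrow> bool" where
  "three_uniform_hypergraph V E \<longleftrightarrow> finite V \<and> (\<forall>e\<in>E. e \<subseteq> V \<and> card e = 3)"

text \<open>Feasible SDP solution: v gives the vectors of the vertices, v0 the vector of the
  special element (empty set). All unit vectors, and v_a+v_b+v_c = -v0 on every edge.\<close>
definition sdp_feasible :: "'v set \<Rightarrow> 'v set set \<Rightarrow> ('v \<Rightarrow> 'a::euclidean_space) \<Rightarrow> 'a \<Rightarrow> bool" where
  "sdp_feasible V E v v0 \<longleftrightarrow> norm v0 = 1 \<and> (\<forall>a\<in>V. norm (v a) = 1) \<and>
     (\<forall>a b c. {a, b, c} \<in> E \<longrightarrow> v a + v b + v c = - v0)"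

definition gamma :: "('v \<Rightarrow> 'a::euclidean_space) \<Rightarrow> 'a \<Rightarrow> 'v \<Rightarrow> real" where
  "gamma v v0 a = inner (v a) v0"

definition balanced :: "('v \<Rightarrow> 'a::euclidean_space) \<Rightarrow> 'a \<Rightarrow> real \<Rightarrow> 'v \<Rightarrow> bool" where
  "balanced v v0 \<epsilon> a \<longleftrightarrow> gamma v v0 a \<in> {-1/3 - \<epsilon> .. -1/3 + \<epsilon>}"

definition ubar :: "('v \<Rightarrow> 'a::euclidean_space) \<Rightarrow> 'a \<Rightarrow> 'v \<Rightarrow> 'a" where
  "ubar v v0 a = (1 / sqrt (1 - (gamma v v0 a)\<^sup>2)) *\<^sub>R (v a - gamma v v0 a *\<^sub>R v0)"

end

theory Submission
  imports Defs
begin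

text \<open>The components \<open>w x = v x - \<gamma> x *\<^sub>R v0\<close> orthogonal to \<open>v0\<close> sum to zero along
  an edge, because the \<open>\<gamma>\<close>'s sum to \<open>-1\<close>. Their norms \<open>sqrt (1 - \<gamma> x\<^sup>2)\<close> are within
  \<open>\<epsilon>\<close> (relatively) of \<open>sqrt 8 / 3\<close>, the value at \<open>\<gamma> x = -1/3\<close>, so each \<open>ubar x\<close> is
  within \<open>\<epsilon>\<close> of \<open>(3 / sqrt 8) *\<^sub>R w x\<close>. Summing over the edge, these multiples cancel,
  leaving a vector of norm at most \<open>3\<epsilon>\<close>; finally \<open>9\<epsilon>\<^sup>2 \<le> 18\<epsilon>\<close> as \<open>\<epsilon> \<le> 1\<close>.\<close>

lemma abs_sqrt_minus_one_le:
  fixes y :: real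
  assumes "y \<ge> 0"
  shows "\<bar>sqrt y - 1\<bar> \<le> \<bar>y - 1\<bar>"
proof -
  have "y - 1 = (sqrt y - 1) * (sqrt y + 1)"
    using assms by (simp add: algebra_simps flip: power2_eq_square)
  then have "\<bar>y - 1\<bar> = \<bar>sqrt y - 1\<bar> * (sqrt y + 1)"
    using assms by (simp add: abs_mult)
  also have "\<dots> \<ge> \<bar>sqrt y - 1\<bar>"
    using assms by (simp add: mult_le_cancel_left1)
  finally show ?thesis .
qed

lemma abs_one_minus_scaled_sqrt_le:
  fixes g e :: real
  assumes "\<bar>g + 1/3\<bar> \<le> e" and "e \<le> 1/100"
  shows "\<bar>1 - (3 / sqrt 8) * sqrt (1 - g\<^sup>2)\<bar> \<le> e"
proof -
  define t where "t = g + 1/3"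
  define y where "y = 9 * (1 - g\<^sup>2) / 8"
  have t: "\<bar>t\<bar> \<le> e" using assms(1) by (simp add: t_def)
  have "t\<^sup>2 \<le> e * (1/100)"
    using t assms(2) by (metis abs_ge_zero mult_mono power2_abs power2_eq_square order_trans)
  moreover have "y - 1 = 3/4 * t - 9/8 * t\<^sup>2"
    unfolding y_def t_def by (simp add: field_simps power2_eq_square)
  ultimately have y: "\<bar>y - 1\<bar> \<le> e"
    using t zero_le_power2[of t] unfolding abs_le_iff by linarith
  have "sqrt y = sqrt 9 * sqrt (1 - g\<^sup>2) / sqrt 8"
    unfolding y_def real_sqrt_divide real_sqrt_mult ..
  then have "(3 / sqrt 8) * sqrt (1 - g\<^sup>2) = sqrt y"
    by (simp add: real_sqrt_unique[of 3 9])
  moreover have "y \<ge> 0"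
    using y assms(2) by (simp add: abs_le_iff)
  ultimately show ?thesis
    using abs_sqrt_minus_one_le[of y] y by (simp add: abs_minus_commute)
qed

lemma norm_sub_inner_scaleR_unit:
  fixes x u :: "'a::real_inner"
  assumes "norm x = 1" and "norm u = 1"
  shows "norm (x - inner x u *\<^sub>R u) = sqrt (1 - (inner x u)\<^sup>2)"
proof -
  have "inner x x = 1" and "inner u u = 1"
    using assms by (simp_all add: norm_eq_sqrt_inner)
  then have "inner (x - inner x u *\<^sub>R u) (x - inner x u *\<^sub>R u) = 1 - (inner x u)\<^sup>2"
    by (simp add: inner_diff_left inner_diff_right inner_commute power2_eq_square)
  then have "(norm (x - inner x u *\<^sub>R u))\<^sup>2 = 1 - (inner x u)\<^sup>2"
    by (simp add: power2_norm_eq_inner)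
  then show ?thesis
    by (metis norm_ge_zero real_sqrt_abs abs_of_nonneg)
qed

lemma norm_ubar_minus_scaled_component_le:
  fixes v :: "'v \<Rightarrow> 'a::euclidean_space"
  assumes "norm v0 = 1" and "norm (v x) = 1"
    and "balanced v v0 \<epsilon> x" and "\<epsilon> \<le> 1/100"
  shows "norm (ubar v v0 x - (3 / sqrt 8) *\<^sub>R (v x - gamma v v0 x *\<^sub>R v0)) \<le> \<epsilon>"
proof -
  define g where "g = gamma v v0 x"
  define r where "r = sqrt (1 - g\<^sup>2)"
  have g: "\<bar>g + 1/3\<bar> \<le> \<epsilon>"
    using assms(3) by (auto simp: balanced_def g_def)
  then have "g\<^sup>2 < 1"
    using assms(4) by (simp add: abs_square_less_1 abs_le_iff abs_less_iff)
  then have "r > 0" by (simp add: r_def)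
  have w: "norm (v x - g *\<^sub>R v0) = r"
    using norm_sub_inner_scaleR_unit[OF assms(2,1)] by (simp add: g_def gamma_def r_def)
  have "ubar v v0 x - (3 / sqrt 8) *\<^sub>R (v x - g *\<^sub>R v0) = (1 / r - 3 / sqrt 8) *\<^sub>R (v x - g *\<^sub>R v0)"
    by (simp add: ubar_def g_def r_def algebra_simps)
  also have "norm \<dots> = \<bar>1 / r - 3 / sqrt 8\<bar> * r"
    by (simp add: w)
  also have "\<dots> = \<bar>1 - (3 / sqrt 8) * r\<bar>"
    using \<open>r > 0\<close> by (simp add: abs_mult[symmetric] field_simps)
  also have "\<dots> \<le> \<epsilon>"
    using abs_one_minus_scaled_sqrt_le[OF g assms(4)] by (simp add: r_def)
  finally show ?thesis by (simp add: g_def)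
qed

lemma sum_orthogonal_components_eq_0:
  assumes "sdp_feasible V E v v0" and "{a, b, c} \<in> E"
  shows "(v a - gamma v v0 a *\<^sub>R v0) + (v b - gamma v v0 b *\<^sub>R v0) + (v c - gamma v v0 c *\<^sub>R v0) = 0"
proof -
  have sum: "v a + v b + v c = - v0" and "inner v0 v0 = 1"
    using assms by (auto simp: sdp_feasible_def norm_eq_sqrt_inner)
  then have "gamma v v0 a + gamma v v0 b + gamma v v0 c = -1"
    by (metis gamma_def inner_add_left inner_minus_left)
  then show ?thesis
    using sum by (simp add: algebra_simps flip: scaleR_add_left)
qed

lemma norm_sum_ubar_edge_le:
  assumes "sdp_feasible V E v v0" and "{a, b, c} \<in> E" and "{a, b, c} \<subseteq> V"
    and "\<forall>x\<in>{a, b, c}. balanced v v0 \<epsilon> x" and "\<epsilon> \<le> 1/100"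
  shows "norm (ubar v v0 a + ubar v v0 b + ubar v v0 c) \<le> 3 * \<epsilon>"
proof -
  define w where "w x = v x - gamma v v0 x *\<^sub>R v0" for x
  define d where "d x = ubar v v0 x - (3 / sqrt 8) *\<^sub>R w x" for x
  have d: "norm (d x) \<le> \<epsilon>" if "x \<in> {a, b, c}" for x
    using norm_ubar_minus_scaled_component_le[of v0 v x \<epsilon>] assms that
    by (auto simp: sdp_feasible_def d_def w_def)
  have "w a + w b + w c = 0"
    using sum_orthogonal_components_eq_0[OF assms(1,2)] by (simp add: w_def)
  then have "ubar v v0 a + ubar v v0 b + ubar v v0 c = d a + d b + d c"
    by (simp add: d_def algebra_simps flip: scaleR_add_right)
  also have "norm \<dots> \<le> norm (d a) + norm (d b) + norm (d c)"
    using norm_triangle_ineq[of "d a + d b" "d c"] norm_triangle_ineq[of "d a" "d b"] by linarith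
  also have "\<dots> \<le> 3 * \<epsilon>"
    using d[of a] d[of b] d[of c] by simp
  finally show ?thesis .
qed

lemma three_uniform_hypergraph_card_ge_3:
  assumes "three_uniform_hypergraph V E" and "e \<in> E"
  shows "card V \<ge> 3"
  using assms card_mono[of V e] unfolding three_uniform_hypergraph_def by auto

theorem lemma4p1:
  fixes V :: "'v set" and E :: "'v set set"
    and v :: "'v \<Rightarrow> 'a::euclidean_space" and v0 :: 'a and \<epsilon> :: real
  assumes "three_uniform_hypergraph V E"
    and "\<epsilon> = 1 / (real (card V)) ^ 100"
    and "sdp_feasible V E v v0"
    and "\<forall>a\<in>V. balanced v v0 \<epsilon> a"
    and "{a, b, c} \<in> E"
  shows "(norm (ubar v v0 a + ubar v v0 b + ubar v v0 c))\<^sup>2 \<le> 18 * \<epsilon>"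
proof -
  have "card V \<ge> 3"
    using three_uniform_hypergraph_card_ge_3[OF assms(1,5)] .
  then have "(3::real) ^ 100 \<le> real (card V) ^ 100"
    by (intro power_mono) auto
  then have "100 \<le> real (card V) ^ 100"
    by simp
  then have \<epsilon>: "0 < \<epsilon>" "\<epsilon> \<le> 1/100"
    unfolding assms(2) using \<open>card V \<ge> 3\<close> by (simp_all add: field_simps)
  have "{a, b, c} \<subseteq> V"
    using assms(1,5) by (auto simp: three_uniform_hypergraph_def)
  then have "norm (ubar v v0 a + ubar v v0 b + ubar v v0 c) \<le> 3 * \<epsilon>"
    using norm_sum_ubar_edge_le[OF assms(3,5)] assms(4) \<epsilon>(2) by blast
  then have "(norm (ubar v v0 a + ubar v v0 b + ubar v v0 c))\<^sup>2 \<le> (3 * \<epsilon>)\<^sup>2"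
    by (intro power_mono) auto
  also have "\<dots> \<le> 18 * \<epsilon>"
    using \<epsilon> by (simp add: power2_eq_square)
  finally show ?thesis .
qed

end
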